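(* Let $T$ be a tree of order $n$. Then $$\frac{n+2\gamma(T)}{3}\le \operatorname{avd}(T)\le\frac{n+2\Gamma(T)}{3}.$$
   Context: A dominating set of a graph $G=(V,E)$ is a set $S\subseteq V$ such that every vertex is in $S$ or adjacent to a vertex of $S$; it is minimal if no proper subset is dominating. $\gamma(T)$ is the minimum size of a dominating set and $\Gamma(T)$ the maximum size of a minimal dominating set. $\operatorname{avd}(T)=\frac{1}{|\mathcal{D}(T)|}\sum_{S\in\mathcal{D}(T)}|S|$ is the average size of a dominating set, where $\mathcal{D}(T)$ is the collection of all dominating sets of $T$. *)

theory Defs
  imports Complex_Main
begin

definition simple_graph :: "'a set \<Rightarrow> ('a \<Rightarrow> 'a \<Rightarrow> bool) \<Rightarrow> bool" where
  "simple_graph V E \<longleftrightarrow> finite V \<and> (\<forall>u v. E u v \<longrightarrow> u \<in> V \<and> v \<in> V)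
     \<and> (\<forall>u v. E u v \<longrightarrow> E v u) \<and> (\<forall>v. \<not> E v v)"

definition connected_graph :: "'a set \<Rightarrow> ('a \<Rightarrow> 'a \<Rightarrow> bool) \<Rightarrow> bool" where
  "connected_graph V E \<longleftrightarrow> V \<noteq> {} \<and> (\<forall>u\<in>V. \<forall>v\<in>V. E\<^sup>*\<^sup>* u v)"

definition is_cycle :: "('a \<Rightarrow> 'a \<Rightarrow> bool) \<Rightarrow> 'a list \<Rightarrow> bool" where
  "is_cycle E cs \<longleftrightarrow> length cs \<ge> 3 \<and> distinct cs
     \<and> (\<forall>i. Suc i < length cs \<longrightarrow> E (cs ! i) (cs ! Suc i))
     \<and> E (last cs) (hd cs)"

definition tree :: "'a set \<Rightarrow> ('a \<Rightarrow> 'a \<Rightarrow> bool) \<Rightarrow> bool" where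
  "tree V E \<longleftrightarrow> simple_graph V E \<and> connected_graph V E \<and> (\<nexists>cs. is_cycle E cs)"

definition dominating :: "'a set \<Rightarrow> ('a \<Rightarrow> 'a \<Rightarrow> bool) \<Rightarrow> 'a set \<Rightarrow> bool" where
  "dominating V E S \<longleftrightarrow> S \<subseteq> V \<and> (\<forall>v\<in>V. v \<in> S \<or> (\<exists>u\<in>S. E u v))"

definition minimal_dominating :: "'a set \<Rightarrow> ('a \<Rightarrow> 'a \<Rightarrow> bool) \<Rightarrow> 'a set \<Rightarrow> bool" where
  "minimal_dominating V E S \<longleftrightarrow> dominating V E S \<and> (\<forall>S'. S' \<subset> S \<longrightarrow> \<not> dominating V E S')"

definition dom_sets :: "'a set \<Rightarrow> ('a \<Rightarrow> 'a \<Rightarrow> bool) \<Rightarrow> 'a set set" where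
  "dom_sets V E = {S. dominating V E S}"

definition domination_number :: "'a set \<Rightarrow> ('a \<Rightarrow> 'a \<Rightarrow> bool) \<Rightarrow> nat" where
  "domination_number V E = Min (card ` dom_sets V E)"

definition upper_domination_number :: "'a set \<Rightarrow> ('a \<Rightarrow> 'a \<Rightarrow> bool) \<Rightarrow> nat" where
  "upper_domination_number V E = Max (card ` {S. minimal_dominating V E S})"

definition avd :: "'a set \<Rightarrow> ('a \<Rightarrow> 'a \<Rightarrow> bool) \<Rightarrow> real" where
  "avd V E = (\<Sum>S\<in>dom_sets V E. real (card S)) / real (card (dom_sets V E))"

end

theory Submission
  imports Defs
begin

(*
  Call a vertex v of a dominating set S removable if S - {v} is still dominating, and let r(S)
  be the number of removable vertices of S. The map (S, v) |-> (insert v S, v) sends the pairs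
  with v not in S bijectively onto the pairs with v removable in S, so the sum of r(S) over all
  dominating sets S equals the sum of n - |S|. The theorem therefore follows by averaging the
  pointwise bounds  2 gamma + r(S) <= 2 |S| <= 2 Gamma + r(S),  valid for every dominating set S
  of a forest.

  Lower bound: peeling off leaves, the vertices of a forest can be 2-coloured so that every closed
  neighbourhood containing two vertices of S sees both colours on S. Deleting from S either colour
  class of its removable vertices then leaves a dominating set, so gamma <= |S| - |X| for both
  classes X, whose sizes add up to r(S).

  Upper bound: a non-removable vertex of S with a neighbour in S has a private neighbour outside S.
  Adding these private neighbours to the non-isolated part of S, the larger colour class of a
  proper 2-colouring of the result, together with the isolated vertices of S, is an independent
  set of size at least |S| - r(S)/2; it extends to a maximal independent set, which is a minimal
  dominating set.
*)

definition forest :: "'a set \<Rightarrow> ('a \<Rightarrow> 'a \<Rightarrow> bool) \<Rightarrow> bool" where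
  "forest V E \<longleftrightarrow> simple_graph V E \<and> (\<nexists>cs. is_cycle E cs)"

lemma tree_imp_forest: "tree V E \<Longrightarrow> forest V E"
  unfolding tree_def forest_def by blast

lemma forestD:
  assumes "forest V E"
  shows "finite V" "symp E" "irreflp E" "\<nexists>cs. is_cycle E cs"
  using assms unfolding forest_def simple_graph_def symp_def irreflp_def by blast+

definition path_in :: "('a \<Rightarrow> 'a \<Rightarrow> bool) \<Rightarrow> 'a set \<Rightarrow> 'a list \<Rightarrow> bool" where
  "path_in E W p \<longleftrightarrow> p \<noteq> [] \<and> distinct p \<and> set p \<subseteq> W
     \<and> (\<forall>i. Suc i < length p \<longrightarrow> E (p ! i) (p ! Suc i))"

lemma length_path_in_le_card: "finite W \<Longrightarrow> path_in E W p \<Longrightarrow> length p \<le> card W"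
  unfolding path_in_def by (metis card_mono distinct_card)

lemma path_in_snoc:
  assumes "path_in E W p" "c \<in> W" "c \<notin> set p" "E (last p) c"
  shows "path_in E W (p @ [c])"
  using assms unfolding path_in_def
  by (auto simp: nth_append last_conv_nth less_Suc_eq) (metis diff_Suc_Suc diff_zero)

lemma is_cycle_drop:
  assumes "path_in E W p" "j + 3 \<le> length p" "E (last p) (p ! j)"
  shows "is_cycle E (drop j p)"
  using assms unfolding path_in_def is_cycle_def by (auto simp: hd_drop_conv_nth)

lemma acyclic_has_leaf:
  assumes acyclic: "\<nexists>cs. is_cycle E cs" and "irreflp E" and "finite W" "W \<noteq> {}"
  shows "\<exists>l\<in>W. \<forall>a\<in>W. \<forall>b\<in>W. E l a \<longrightarrow> E l b \<longrightarrow> a = b"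
proof -
  obtain w where "w \<in> W" using \<open>W \<noteq> {}\<close> by blast
  then have "path_in E W [w]" unfolding path_in_def by simp
  moreover have "\<forall>q. path_in E W q \<longrightarrow> length q < Suc (card W)"
    using length_path_in_le_card[OF \<open>finite W\<close>] by (simp add: less_Suc_eq_le)
  ultimately obtain p where p: "path_in E W p"
    and longest: "\<And>q. path_in E W q \<Longrightarrow> length q \<le> length p"
    using ex_has_greatest_nat[where f = length] by blast
  have "p \<noteq> []" "last p \<in> W" using p unfolding path_in_def by auto
  \<comment> \<open>the end of a longest path is a leaf: another neighbour would extend it or close a cycle\<close>
  moreover have "a = b" if "a \<in> W" "b \<in> W" "E (last p) a" "E (last p) b" for a b
  proof (rule ccontr)
    assume "a \<noteq> b"
    define c where "c = (if 2 \<le> length p \<and> a = p ! (length p - 2) then b else a)"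
    have "c \<in> W" "E (last p) c" and not_pred: "2 \<le> length p \<Longrightarrow> c \<noteq> p ! (length p - 2)"
      using \<open>a \<noteq> b\<close> that unfolding c_def by auto
    show False
    proof (cases "c \<in> set p")
      case False
      with p \<open>c \<in> W\<close> \<open>E (last p) c\<close> have "path_in E W (p @ [c])" by (intro path_in_snoc)
      then show False using longest[of "p @ [c]"] by simp
    next
      case True
      then obtain j where j: "j < length p" "p ! j = c" by (meson in_set_conv_nth)
      have "last p = p ! (length p - 1)" using \<open>p \<noteq> []\<close> by (rule last_conv_nth)
      then have "j \<noteq> length p - 1"
        using \<open>irreflp E\<close> \<open>E (last p) c\<close> j(2) by (auto dest: irreflpD)
      then have "2 \<le> length p" using j by arith
      then have "j \<noteq> length p - 2" using not_pred j by auto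
      then have "j + 3 \<le> length p" using j \<open>j \<noteq> length p - 1\<close> by arith
      then have "is_cycle E (drop j p)" using is_cycle_drop p \<open>E (last p) c\<close> j by blast
      with acyclic show False by blast
    qed
  qed
  ultimately show ?thesis by blast
qed

lemma acyclic_leaf_induct [consumes 3, case_names empty leaf]:
  assumes "\<nexists>cs. is_cycle E cs" "irreflp E" "finite W"
    and empty: "P {}"
    and leaf: "\<And>W l a. finite W \<Longrightarrow> l \<in> W \<Longrightarrow> (\<And>b. b \<in> W \<Longrightarrow> E l b \<Longrightarrow> b = a)
      \<Longrightarrow> P (W - {l}) \<Longrightarrow> P W"
  shows "P W"
  using \<open>finite W\<close>
proof (induction W rule: finite_psubset_induct)
  case (psubset W)
  show ?case
  proof (cases "W = {}")
    case True
    with empty show ?thesis by simp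
  next
    case False
    then obtain l where "l \<in> W" and leaf_l: "\<forall>a\<in>W. \<forall>b\<in>W. E l a \<longrightarrow> E l b \<longrightarrow> a = b"
      using acyclic_has_leaf[OF assms(1,2) psubset.hyps] by blast
    obtain a where a: "\<And>b. b \<in> W \<Longrightarrow> E l b \<Longrightarrow> b = a"
    proof (cases "\<exists>a\<in>W. E l a")
      case True
      then obtain a where "a \<in> W" "E l a" by blast
      with leaf_l show ?thesis by (intro that) blast
    qed blast
    have "P (W - {l})" using psubset.IH \<open>l \<in> W\<close> by blast
    from leaf[OF psubset.hyps \<open>l \<in> W\<close> a this] show ?thesis .
  qed
qed

lemma acyclic_two_colouring:
  assumes "\<nexists>cs. is_cycle E cs" "irreflp E" "symp E" "finite W"
  shows "\<exists>col :: 'a \<Rightarrow> bool. \<forall>x\<in>W. \<forall>y\<in>W. E x y \<longrightarrow> col x \<noteq> col y"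
  using assms(1,2,4)
proof (induction W rule: acyclic_leaf_induct)
  case empty
  show ?case by simp
next
  case (leaf W l a)
  then obtain col :: "'a \<Rightarrow> bool" where col: "\<forall>x\<in>W - {l}. \<forall>y\<in>W - {l}. E x y \<longrightarrow> col x \<noteq> col y" by blast
  define col' where "col' = col(l := \<not> col a)"
  have "col' x \<noteq> col' y" if "x \<in> W" "y \<in> W" "E x y" for x y
  proof -
    have "x \<noteq> y" using \<open>E x y\<close> \<open>irreflp E\<close> by (auto dest: irreflpD)
    consider "x = l" | "y = l" | "x \<noteq> l" "y \<noteq> l" by blast
    then show ?thesis
    proof cases
      case 1
      then have "y = a" using that leaf.hyps(3) by blast
      then show ?thesis using 1 \<open>x \<noteq> y\<close> unfolding col'_def by simp
    next
      case 2
      then have "x = a" using that leaf.hyps(3) \<open>symp E\<close> by (blast dest: sympD)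
      then show ?thesis using 2 \<open>x \<noteq> y\<close> unfolding col'_def by simp
    next
      case 3
      then show ?thesis using col that unfolding col'_def by simp
    qed
  qed
  then show ?case by blast
qed

definition closed_nbhd :: "('a \<Rightarrow> 'a \<Rightarrow> bool) \<Rightarrow> 'a set \<Rightarrow> 'a \<Rightarrow> 'a set" where
  "closed_nbhd E A w = {z \<in> A. z = w \<or> E w z}"

lemma closed_nbhd_Diff [simp]: "closed_nbhd E (A - B) w = closed_nbhd E A w - B"
  unfolding closed_nbhd_def by auto

definition monochromatic :: "('a \<Rightarrow> bool) \<Rightarrow> 'a set \<Rightarrow> bool" where
  "monochromatic c A \<longleftrightarrow> (\<forall>x\<in>A. \<forall>y\<in>A. c x = c y)"

definition separating_colouring :: "('a \<Rightarrow> 'a \<Rightarrow> bool) \<Rightarrow> 'a set \<Rightarrow> 'a set \<Rightarrow> ('a \<Rightarrow> bool) \<Rightarrow> bool" where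
  "separating_colouring E W T c \<longleftrightarrow>
     (\<forall>w\<in>W. monochromatic c (closed_nbhd E (W \<inter> T) w)
        \<longrightarrow> (\<forall>x\<in>closed_nbhd E (W \<inter> T) w. \<forall>y\<in>closed_nbhd E (W \<inter> T) w. x = y))"

lemma separating_colouring_add_leaf:
  assumes "symp E" and "l \<in> W" and leaf: "\<And>b. b \<in> W \<Longrightarrow> E l b \<Longrightarrow> b = a"
    and c': "separating_colouring E (W - {l}) T c'"
  shows "\<exists>c. separating_colouring E W T c"
proof -
  define N where "N W' w = closed_nbhd E (W' \<inter> T) w" for W' w
  have N_remove: "N (W - {l}) w = N W w - {l}" for w
    unfolding N_def closed_nbhd_def by auto
  \<comment> \<open>the leaf gets the colour opposite to t, a vertex of N[a] other than l and if possible a itself,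
    so that both N[l] and N[a] see two colours\<close>
  obtain t where t_in: "N (W - {l}) a \<noteq> {} \<Longrightarrow> t \<in> N (W - {l}) a"
    and t_self: "a \<in> N (W - {l}) a \<Longrightarrow> t = a"
    by (cases "a \<in> N (W - {l}) a") blast+
  define c where "c = c'(l := \<not> c' t)"
  have at_l: "x = y" if "monochromatic c (N W l)" "x \<in> N W l" "y \<in> N W l" for x y
  proof (rule ccontr)
    assume "x \<noteq> y"
    have "N W l \<subseteq> {l, a}" using leaf unfolding N_def closed_nbhd_def by auto
    with \<open>x \<noteq> y\<close> that(2,3) have "l \<in> N W l" "a \<in> N W l" "a \<noteq> l" by auto
    then have "a \<in> N (W - {l}) a" unfolding N_def closed_nbhd_def by auto
    then have "c a \<noteq> c l" using t_self \<open>a \<noteq> l\<close> unfolding c_def by simp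
    with that(1) \<open>l \<in> N W l\<close> \<open>a \<in> N W l\<close> show False unfolding monochromatic_def by blast
  qed
  have at_a: "x = y" if "l \<in> N W a" "monochromatic c (N W a)" "x \<in> N W a" "y \<in> N W a" for x y
  proof (rule ccontr)
    assume "x \<noteq> y"
    with that(3,4) have "N (W - {l}) a \<noteq> {}" using N_remove by blast
    then have "t \<in> N W a" "t \<noteq> l" using t_in N_remove by auto
    then have "c t \<noteq> c l" unfolding c_def by simp
    with that(1,2) \<open>t \<in> N W a\<close> show False unfolding monochromatic_def by blast
  qed
  have elsewhere: "x = y"
    if "w \<in> W" "w \<noteq> l" "l \<notin> N W w" "monochromatic c (N W w)" "x \<in> N W w" "y \<in> N W w" for w x y
  proof -
    have eq: "N (W - {l}) w = N W w" using N_remove \<open>l \<notin> N W w\<close> by auto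
    have mono: "monochromatic c' (N W w)"
      using that(3,4) unfolding c_def monochromatic_def by (metis fun_upd_other)
    have "w \<in> W - {l}" using that(1,2) by simp
    with c' have "monochromatic c' (N (W - {l}) w)
        \<longrightarrow> (\<forall>x\<in>N (W - {l}) w. \<forall>y\<in>N (W - {l}) w. x = y)"
      unfolding separating_colouring_def N_def by (rule bspec)
    then show "x = y" unfolding eq using mono that(5,6) by blast
  qed
  have "separating_colouring E W T c"
    unfolding separating_colouring_def N_def[symmetric]
  proof (intro ballI impI)
    fix w x y
    assume w: "w \<in> W" "monochromatic c (N W w)" and xy: "x \<in> N W w" "y \<in> N W w"
    consider "w = l" | "w \<noteq> l" "l \<in> N W w" | "w \<noteq> l" "l \<notin> N W w" by blast
    then show "x = y"
    proof cases
      case 1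
      then show ?thesis using at_l w xy by blast
    next
      case 2
      then have "E w l" unfolding N_def closed_nbhd_def by auto
      with w \<open>symp E\<close> have "w = a" by (auto dest: sympD leaf)
      then show ?thesis using at_a 2 w xy by blast
    next
      case 3
      then show ?thesis using elsewhere w xy by blast
    qed
  qed
  then show ?thesis by blast
qed

lemma acyclic_separating_colouring:
  assumes "\<nexists>cs. is_cycle E cs" "irreflp E" "symp E" "finite W"
  shows "\<exists>c. separating_colouring E W T c"
  using assms(1,2,4)
proof (induction W rule: acyclic_leaf_induct)
  case empty
  show ?case unfolding separating_colouring_def closed_nbhd_def by simp
next
  case (leaf W l a)
  then obtain c' where "separating_colouring E (W - {l}) T c'" by blast
  from separating_colouring_add_leaf[OF \<open>symp E\<close> leaf.hyps(2,3) this] show ?case .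
qed

definition removable :: "'a set \<Rightarrow> ('a \<Rightarrow> 'a \<Rightarrow> bool) \<Rightarrow> 'a set \<Rightarrow> 'a set" where
  "removable V E S = {v \<in> S. dominating V E (S - {v})}"

definition independent :: "('a \<Rightarrow> 'a \<Rightarrow> bool) \<Rightarrow> 'a set \<Rightarrow> bool" where
  "independent E I \<longleftrightarrow> (\<forall>x\<in>I. \<forall>y\<in>I. \<not> E x y)"

lemma finite_dom_sets: "finite V \<Longrightarrow> finite (dom_sets V E)"
  unfolding dom_sets_def dominating_def by (rule finite_subset[of _ "Pow V"]) auto

lemma dominating_self: "dominating V E V"
  unfolding dominating_def by blast

lemma domination_number_le_card:
  assumes "finite V" "dominating V E S"
  shows "domination_number V E \<le> card S"
  unfolding domination_number_def
  using assms finite_dom_sets[OF assms(1)] by (intro Min_le) (auto simp: dom_sets_def)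

lemma dominating_iff_closed_nbhd:
  assumes "symp E"
  shows "dominating V E S \<longleftrightarrow> S \<subseteq> V \<and> (\<forall>w\<in>V. closed_nbhd E S w \<noteq> {})"
  using assms unfolding dominating_def closed_nbhd_def symp_def by blast

lemma dominating_Diff_monochromatic:
  assumes "symp E" and dom: "dominating V E S" and sep: "separating_colouring E V S c"
    and X: "X \<subseteq> removable V E S" "monochromatic c X"
  shows "dominating V E (S - X)"
proof -
  have "S \<subseteq> V" using dom unfolding dominating_def by blast
  have "closed_nbhd E (S - X) w \<noteq> {}" if "w \<in> V" for w
  proof
    assume "closed_nbhd E (S - X) w = {}"
    then have N_X: "closed_nbhd E S w \<subseteq> X" by simp
    from dom \<open>w \<in> V\<close> obtain z where z: "z \<in> closed_nbhd E S w"
      unfolding dominating_iff_closed_nbhd[OF \<open>symp E\<close>] by blast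
    with X(1) N_X have "dominating V E (S - {z})" unfolding removable_def by blast
    with \<open>w \<in> V\<close> obtain y where y: "y \<in> closed_nbhd E S w" "y \<noteq> z"
      unfolding dominating_iff_closed_nbhd[OF \<open>symp E\<close>] by auto
    have "V \<inter> S = S" using \<open>S \<subseteq> V\<close> by blast
    with sep \<open>w \<in> V\<close> have "monochromatic c (closed_nbhd E S w)
        \<longrightarrow> (\<forall>x\<in>closed_nbhd E S w. \<forall>y\<in>closed_nbhd E S w. x = y)"
      unfolding separating_colouring_def by simp
    moreover have "monochromatic c (closed_nbhd E S w)"
      using X(2) N_X unfolding monochromatic_def by blast
    ultimately show False using y z by blast
  qed
  with \<open>S \<subseteq> V\<close> show ?thesis
    unfolding dominating_iff_closed_nbhd[OF \<open>symp E\<close>] by blast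
qed

lemma domination_number_removable_bound:
  assumes "forest V E" and dom: "dominating V E S"
  shows "2 * domination_number V E + card (removable V E S) \<le> 2 * card S"
proof -
  have "finite V" "symp E" using forestD[OF \<open>forest V E\<close>] by blast+
  have "finite S" using dom \<open>finite V\<close> unfolding dominating_def by (blast intro: finite_subset)
  obtain c where sep: "separating_colouring E V S c"
    using acyclic_separating_colouring forestD[OF \<open>forest V E\<close>] by blast
  define R where "R = removable V E S"
  have "R \<subseteq> S" unfolding R_def removable_def by blast
  have bound: "domination_number V E + card Y \<le> card S" if "Y \<subseteq> R" "monochromatic c Y" for Y
  proof -
    have "domination_number V E \<le> card (S - Y)"
      using dominating_Diff_monochromatic[OF \<open>symp E\<close> dom sep] that \<open>finite V\<close>
      unfolding R_def by (blast intro: domination_number_le_card)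
    moreover have "Y \<subseteq> S" using that(1) \<open>R \<subseteq> S\<close> by blast
    then have "card (S - Y) = card S - card Y" "card Y \<le> card S"
      using \<open>finite S\<close> by (simp_all add: card_Diff_subset finite_subset card_mono)
    ultimately show ?thesis by linarith
  qed
  have "domination_number V E + card (R \<inter> Collect c) \<le> card S"
    by (rule bound) (auto simp: monochromatic_def)
  moreover have "domination_number V E + card (R - Collect c) \<le> card S"
    by (rule bound) (auto simp: monochromatic_def)
  moreover have "card R = card (R \<inter> Collect c) + card (R - Collect c)"
    using \<open>finite S\<close> \<open>R \<subseteq> S\<close> by (blast intro: card_Int_Diff finite_subset)
  ultimately show ?thesis unfolding R_def by linarith
qed

lemma maximal_independent_imp_minimal_dominating:
  assumes "symp E" "irreflp E" and "J \<subseteq> V" "independent E J"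
    and maximal: "\<And>v. v \<in> V \<Longrightarrow> v \<notin> J \<Longrightarrow> \<not> independent E (insert v J)"
  shows "minimal_dominating V E J"
  unfolding minimal_dominating_def
proof (intro conjI allI impI)
  have "\<exists>u\<in>J. E u v" if "v \<in> V" "v \<notin> J" for v
  proof (rule ccontr)
    assume "\<not> (\<exists>u\<in>J. E u v)"
    with \<open>independent E J\<close> \<open>symp E\<close> \<open>irreflp E\<close> have "independent E (insert v J)"
      unfolding independent_def by (auto dest: sympD irreflpD)
    with maximal that show False by blast
  qed
  with \<open>J \<subseteq> V\<close> show "dominating V E J" unfolding dominating_def by blast
next
  fix S assume "S \<subset> J"
  then obtain v where "v \<in> J" "v \<notin> S" by blast
  moreover have "\<not> E u v" if "u \<in> S" for u
    using that \<open>S \<subset> J\<close> \<open>v \<in> J\<close> \<open>independent E J\<close> unfolding independent_def by blast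
  ultimately show "\<not> dominating V E S"
    using \<open>J \<subseteq> V\<close> unfolding dominating_def by blast
qed

lemma card_independent_le_upper_domination_number:
  assumes "simple_graph V E" "I \<subseteq> V" "independent E I"
  shows "card I \<le> upper_domination_number V E"
proof -
  have "finite V" "symp E" "irreflp E"
    using assms(1) unfolding simple_graph_def symp_def irreflp_def by blast+
  let ?A = "{J. J \<subseteq> V \<and> independent E J}"
  have "finite ?A" using \<open>finite V\<close> by (intro finite_subset[of ?A "Pow V"]) auto
  with assms(2,3) obtain J where J: "J \<subseteq> V" "independent E J" "I \<subseteq> J"
    and maximal: "\<And>K. K \<in> ?A \<Longrightarrow> J \<subseteq> K \<Longrightarrow> J = K"
    using finite_has_maximal2[of ?A I] by auto
  have "minimal_dominating V E J"
    using \<open>symp E\<close> \<open>irreflp E\<close> J(1,2)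
  proof (rule maximal_independent_imp_minimal_dominating)
    fix v assume "v \<in> V" "v \<notin> J"
    show "\<not> independent E (insert v J)"
    proof
      assume "independent E (insert v J)"
      with \<open>v \<in> V\<close> J(1) have "J = insert v J" by (intro maximal) auto
      with \<open>v \<notin> J\<close> show False by blast
    qed
  qed
  moreover have "{S. minimal_dominating V E S} \<subseteq> dom_sets V E"
    unfolding minimal_dominating_def dom_sets_def by blast
  then have "finite {S. minimal_dominating V E S}"
    using finite_dom_sets[OF \<open>finite V\<close>] by (rule finite_subset)
  ultimately have "card J \<le> upper_domination_number V E"
    unfolding upper_domination_number_def by (intro Max_ge) auto
  moreover have "card I \<le> card J" using J \<open>finite V\<close> by (blast intro: card_mono finite_subset)
  ultimately show ?thesis by linarith
qed

lemma forest_independent_half: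
  assumes "forest V E" "W \<subseteq> V"
  shows "\<exists>C\<subseteq>W. independent E C \<and> card W \<le> 2 * card C"
proof -
  have "finite W" using assms forestD(1) finite_subset by blast
  obtain col :: "'a \<Rightarrow> bool" where col: "\<forall>x\<in>W. \<forall>y\<in>W. E x y \<longrightarrow> col x \<noteq> col y"
    using acyclic_two_colouring[OF forestD(4,3,2)[OF \<open>forest V E\<close>] \<open>finite W\<close>] by blast
  have "independent E (W \<inter> Collect col)" "independent E (W - Collect col)"
    using col unfolding independent_def by auto
  moreover have "card W = card (W \<inter> Collect col) + card (W - Collect col)"
    using \<open>finite W\<close> by (rule card_Int_Diff)
  moreover consider "card (W - Collect col) \<le> card (W \<inter> Collect col)"
    | "card (W \<inter> Collect col) \<le> card (W - Collect col)" by linarith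
  ultimately show ?thesis by (metis Diff_subset Int_lower1 add_le_mono mult_2 order_refl)
qed

lemma private_neighbour:
  assumes "irreflp E" and dom: "dominating V E S"
    and "u \<in> S" "u \<notin> removable V E S" "\<exists>x\<in>S. E x u"
  shows "\<exists>p\<in>V - S. E u p \<and> (\<forall>y\<in>S. E y p \<longrightarrow> y = u)"
proof -
  have "\<not> dominating V E (S - {u})" using assms(3,4) unfolding removable_def by blast
  moreover have "S - {u} \<subseteq> V" using dom unfolding dominating_def by blast
  ultimately obtain p where "p \<in> V" "p \<notin> S - {u}" and undominated: "\<forall>y\<in>S - {u}. \<not> E y p"
    unfolding dominating_def by blast
  have "p \<noteq> u"
  proof
    assume "p = u"
    with undominated \<open>irreflp E\<close> have "\<forall>y\<in>S. \<not> E y u" by (auto dest: irreflpD)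
    with \<open>\<exists>x\<in>S. E x u\<close> show False by blast
  qed
  with \<open>p \<notin> S - {u}\<close> have "p \<notin> S" by blast
  with dom \<open>p \<in> V\<close> obtain y where "y \<in> S" "E y p" unfolding dominating_def by blast
  with undominated have "y = u" by blast
  with \<open>E y p\<close> \<open>p \<in> V\<close> \<open>p \<notin> S\<close> undominated show ?thesis by blast
qed

lemma exists_private_neighbours:
  assumes "irreflp E" and dom: "dominating V E S"
  defines "U \<equiv> {u \<in> S - removable V E S. \<exists>x\<in>S. E x u}"
  shows "\<exists>P\<subseteq>V - S. card P = card U \<and> (\<forall>p\<in>P. \<forall>y\<in>S. E y p \<longrightarrow> (\<exists>x\<in>S. E x y))"
proof -
  have "\<forall>u\<in>U. \<exists>p\<in>V - S. E u p \<and> (\<forall>y\<in>S. E y p \<longrightarrow> y = u)"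
    using private_neighbour[OF assms(1,2)] unfolding U_def by blast
  then obtain pn where pn: "\<And>u. u \<in> U \<Longrightarrow> pn u \<in> V - S \<and> E u (pn u) \<and> (\<forall>y\<in>S. E y (pn u) \<longrightarrow> y = u)"
    by metis
  have "inj_on pn U"
  proof (rule inj_onI)
    fix u u' assume "u \<in> U" "u' \<in> U" "pn u = pn u'"
    with pn[of u] pn[of u'] show "u = u'" unfolding U_def by auto
  qed
  then have "card (pn ` U) = card U" by (rule card_image)
  moreover have "pn ` U \<subseteq> V - S" using pn by blast
  moreover have "\<forall>p\<in>pn ` U. \<forall>y\<in>S. E y p \<longrightarrow> (\<exists>x\<in>S. E x y)"
    using pn unfolding U_def by fastforce
  ultimately show ?thesis by blast
qed

lemma isolated_not_removable:
  assumes "dominating V E S" "u \<in> S" "\<forall>x\<in>S. \<not> E x u"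
  shows "u \<notin> removable V E S"
  using assms unfolding removable_def dominating_def by blast

lemma independent_isolated_Un:
  assumes "symp E" "independent E C" "C \<subseteq> S \<union> P"
    and P_nbrs: "\<forall>p\<in>P. \<forall>y\<in>S. E y p \<longrightarrow> (\<exists>x\<in>S. E x y)"
  shows "independent E ({u \<in> S. \<forall>x\<in>S. \<not> E x u} \<union> C)"
proof -
  define I where "I = {u \<in> S. \<forall>x\<in>S. \<not> E x u}"
  have no_edge: "\<not> E y x" if "x \<in> I" "y \<in> I \<union> C" for x y
  proof
    assume "E y x"
    show False
    proof (cases "y \<in> S")
      case True
      with \<open>E y x\<close> \<open>x \<in> I\<close> show False unfolding I_def by blast
    next
      case False
      with that(2) \<open>C \<subseteq> S \<union> P\<close> have "y \<in> P" unfolding I_def by blast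
      moreover have "E x y" "x \<in> S"
        using \<open>E y x\<close> \<open>symp E\<close> \<open>x \<in> I\<close> unfolding I_def by (auto dest: sympD)
      ultimately have "\<exists>z\<in>S. E z x" using P_nbrs by blast
      with \<open>x \<in> I\<close> show False unfolding I_def by blast
    qed
  qed
  have "\<not> E x y" if xy: "x \<in> I \<union> C" "y \<in> I \<union> C" for x y
  proof
    assume "E x y"
    consider "y \<in> I" | "x \<in> I" | "x \<in> C" "y \<in> C" using xy by blast
    then show False
    proof cases
      case 1
      then show False using no_edge xy(1) \<open>E x y\<close> by blast
    next
      case 2
      have "E y x" using \<open>E x y\<close> \<open>symp E\<close> by (rule sympD[rotated])
      then show False using no_edge 2 xy(2) by blast
    next
      case 3
      then show False using \<open>independent E C\<close> \<open>E x y\<close> unfolding independent_def by blast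
    qed
  qed
  then show ?thesis unfolding independent_def I_def by blast
qed

lemma upper_domination_number_removable_bound:
  assumes "forest V E" and dom: "dominating V E S"
  shows "2 * card S \<le> 2 * upper_domination_number V E + card (removable V E S)"
proof -
  have "simple_graph V E" using assms(1) unfolding forest_def by blast
  have "finite V" "symp E" "irreflp E" using forestD[OF \<open>forest V E\<close>] by blast+
  have "S \<subseteq> V" using dom unfolding dominating_def by blast
  then have "finite S" using \<open>finite V\<close> by (rule finite_subset)
  define R where "R = removable V E S"
  define I where "I = {u \<in> S. \<forall>x\<in>S. \<not> E x u}"
  define U where "U = {u \<in> S - R. \<exists>x\<in>S. E x u}"
  obtain P where P: "P \<subseteq> V - S" "card P = card U"
    and P_nbrs: "\<forall>p\<in>P. \<forall>y\<in>S. E y p \<longrightarrow> (\<exists>x\<in>S. E x y)"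
    using exists_private_neighbours[OF \<open>irreflp E\<close> dom] unfolding U_def R_def by blast
  have "R \<subseteq> S" "S - R = U \<union> I" "U \<inter> I = {}"
    using isolated_not_removable[OF dom] unfolding R_def U_def I_def removable_def by auto
  have "finite U" "finite I" using \<open>finite S\<close> unfolding U_def I_def by auto
  have "card S = card R + card (S - R)"
    using card_Int_Diff[OF \<open>finite S\<close>, of R] \<open>R \<subseteq> S\<close> by (simp add: Int_absorb1)
  also have "card (S - R) = card U + card I"
    unfolding \<open>S - R = U \<union> I\<close> using \<open>finite U\<close> \<open>finite I\<close> \<open>U \<inter> I = {}\<close> by (rule card_Un_disjoint)
  finally have card_S: "card S = card R + card U + card I" by simp
  define W where "W = (S - I) \<union> P"
  have "I \<subseteq> S" "W \<subseteq> V" unfolding I_def W_def using \<open>S \<subseteq> V\<close> P(1) by blast+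
  have card_W: "card W + card I = card S + card U"
  proof -
    have "card W = card (S - I) + card P" unfolding W_def
      using P(1) \<open>finite S\<close> \<open>finite V\<close> by (intro card_Un_disjoint) (auto intro: finite_subset)
    moreover have "card (S - I) + card I = card S"
      using card_Int_Diff[OF \<open>finite S\<close>, of I] \<open>I \<subseteq> S\<close> by (simp add: Int_absorb1)
    ultimately show ?thesis using P(2) by linarith
  qed
  obtain C where "C \<subseteq> W" "independent E C" "card W \<le> 2 * card C"
    using forest_independent_half[OF \<open>forest V E\<close> \<open>W \<subseteq> V\<close>] by blast
  then have "independent E (I \<union> C)"
    using independent_isolated_Un[OF \<open>symp E\<close>, of C S P] P_nbrs unfolding I_def W_def by blast
  moreover have "I \<union> C \<subseteq> V" using \<open>I \<subseteq> S\<close> \<open>S \<subseteq> V\<close> \<open>C \<subseteq> W\<close> \<open>W \<subseteq> V\<close> by blast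
  ultimately have "card (I \<union> C) \<le> upper_domination_number V E"
    by (rule card_independent_le_upper_domination_number[OF \<open>simple_graph V E\<close>, rotated])
  moreover have "card (I \<union> C) = card I + card C"
    using \<open>I \<subseteq> S\<close> \<open>C \<subseteq> W\<close> \<open>W \<subseteq> V\<close> \<open>finite S\<close> \<open>finite V\<close> P(1)
    by (intro card_Un_disjoint) (auto simp: W_def intro: finite_subset)
  ultimately show ?thesis using card_S card_W \<open>card W \<le> 2 * card C\<close> unfolding R_def by linarith
qed

lemma dominating_insert: "dominating V E S \<Longrightarrow> v \<in> V \<Longrightarrow> dominating V E (insert v S)"
  unfolding dominating_def by blast

lemma sum_card_removable_eq_sum_card_Diff:
  assumes "finite V"
  shows "(\<Sum>S\<in>dom_sets V E. card (removable V E S)) = (\<Sum>S\<in>dom_sets V E. card (V - S))"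
proof -
  let ?D = "dom_sets V E"
  have "bij_betw (\<lambda>(S, v). (insert v S, v)) (SIGMA S:?D. V - S) (SIGMA T:?D. removable V E T)"
    by (rule bij_betw_byWitness[where f' = "\<lambda>(T, v). (T - {v}, v)"])
      (auto simp: dom_sets_def removable_def dominating_insert insert_absorb
        dest: dominating_def[THEN iffD1])
  then have "card (SIGMA S:?D. V - S) = card (SIGMA T:?D. removable V E T)"
    by (rule bij_betw_same_card)
  moreover have "finite ?D" "\<forall>S\<in>?D. finite (removable V E S)"
    using assms finite_dom_sets unfolding dom_sets_def removable_def dominating_def
    by (auto intro: finite_subset)
  ultimately show ?thesis using assms by simp
qed

lemma sum_card_removable_add_sum_card:
  assumes "finite V"
  shows "(\<Sum>S\<in>dom_sets V E. card (removable V E S)) + (\<Sum>S\<in>dom_sets V E. card S)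
    = card (dom_sets V E) * card V"
proof -
  have "card (V - S) + card S = card V" if "S \<in> dom_sets V E" for S
  proof -
    have "V \<inter> S = S" using that unfolding dom_sets_def dominating_def by blast
    then show ?thesis using card_Int_Diff[OF assms, of S] by simp
  qed
  then show ?thesis
    by (simp add: sum_card_removable_eq_sum_card_Diff[OF assms] sum.distrib[symmetric])
qed

lemma mean_bounds_from_pointwise_bounds:
  fixes r s :: "'a \<Rightarrow> real"
  assumes "finite D" "D \<noteq> {}"
    and total: "(\<Sum>x\<in>D. r x) + (\<Sum>x\<in>D. s x) = real (card D) * m"
    and lower: "\<And>x. x \<in> D \<Longrightarrow> a + r x \<le> 2 * s x"
    and upper: "\<And>x. x \<in> D \<Longrightarrow> 2 * s x \<le> b + r x"
  shows "(m + a) / 3 \<le> (\<Sum>x\<in>D. s x) / real (card D)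
    \<and> (\<Sum>x\<in>D. s x) / real (card D) \<le> (m + b) / 3"
proof -
  have "real (card D) > 0" using assms(1,2) by (simp add: card_gt_0_iff)
  have "(\<Sum>x\<in>D. a + r x) \<le> (\<Sum>x\<in>D. 2 * s x)" using lower by (rule sum_mono)
  then have "real (card D) * a + (\<Sum>x\<in>D. r x) \<le> 2 * (\<Sum>x\<in>D. s x)"
    by (simp add: sum.distrib flip: sum_distrib_left)
  moreover have "(\<Sum>x\<in>D. 2 * s x) \<le> (\<Sum>x\<in>D. b + r x)" using upper by (rule sum_mono)
  then have "2 * (\<Sum>x\<in>D. s x) \<le> real (card D) * b + (\<Sum>x\<in>D. r x)"
    by (simp add: sum.distrib flip: sum_distrib_left)
  ultimately show ?thesis using total \<open>real (card D) > 0\<close>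
    by (simp add: field_simps)
qed

theorem theorem5p1:
  fixes V :: "'a set" and E :: "'a \<Rightarrow> 'a \<Rightarrow> bool" and n :: nat
  assumes "tree V E" and "card V = n"
  shows "(real n + 2 * real (domination_number V E)) / 3 \<le> avd V E
       \<and> avd V E \<le> (real n + 2 * real (upper_domination_number V E)) / 3"
proof -
  have "forest V E" using assms(1) by (rule tree_imp_forest)
  then have "finite V" by (rule forestD)
  have "V \<in> dom_sets V E" using dominating_self unfolding dom_sets_def by blast
  show ?thesis
    unfolding avd_def
  proof (rule mean_bounds_from_pointwise_bounds)
    show "finite (dom_sets V E)" "dom_sets V E \<noteq> {}"
      using finite_dom_sets[OF \<open>finite V\<close>] \<open>V \<in> dom_sets V E\<close> by blast+
    show "(\<Sum>S\<in>dom_sets V E. real (card (removable V E S))) + (\<Sum>S\<in>dom_sets V E. real (card S))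
      = real (card (dom_sets V E)) * real n"
      using arg_cong[where f = real, OF sum_card_removable_add_sum_card[OF \<open>finite V\<close>, of E]]
        assms(2) by simp
    fix S assume "S \<in> dom_sets V E"
    then have "dominating V E S" unfolding dom_sets_def by blast
    show "2 * real (domination_number V E) + real (card (removable V E S)) \<le> 2 * real (card S)"
      using domination_number_removable_bound[OF \<open>forest V E\<close> \<open>dominating V E S\<close>] by linarith
    show "2 * real (card S)
        \<le> 2 * real (upper_domination_number V E) + real (card (removable V E S))"
      using upper_domination_number_removable_bound[OF \<open>forest V E\<close> \<open>dominating V E S\<close>] by linarith
  qed
qed

end
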